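(* Let $X$ be a finite abelian group. The quotient of $C(S_X^+)$ by the ideal generated by the relations $u_{ij}=u_{kl}$ for all $i,j,k,l\in X$ with $i-j=k-l$ is equal to $C(X)$; more precisely, this quotient is commutative, equal to $C(Y)$ for a subgroup $Y\subset S_X$ with $u_{ij}(\sigma)=\delta_{i\sigma(j)}$, and $Y$ is the group of translations $j\mapsto j+x$, $x\in X$, of $X$.
   Context: $C(S_X^+)$ is the universal $C^*$-algebra generated by the entries of a magic matrix $u=(u_{ij})_{i,j\in X}$ (entries are orthogonal projections, each row and column summing to $1$), with Hopf structure $\Delta(u_{ij})=\sum_ku_{ik}\otimes u_{kj}$, $\varepsilon(u_{ij})=\delta_{ij}$, $S(u_{ij})=u_{ji}$. Its commutative quotients of the form $C(Y)$, $Y\subset S_X$ a subgroup of the permutation group of $X$, correspond to $u_{ij}(\sigma)=\delta_{i\sigma(j)}$. *)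

theory Defs
  imports "HOL-Combinatorics.Permutations" Complex_Main
begin

definition cstar_algebra ::
  "(complex \<Rightarrow> 'a::ring_1 \<Rightarrow> 'a) \<Rightarrow> ('a \<Rightarrow> 'a) \<Rightarrow> ('a \<Rightarrow> real) \<Rightarrow> bool" where
  "cstar_algebra scal star nrm \<longleftrightarrow>
     \<comment> \<open>complex vector space / algebra structure\<close>
     (\<forall>x. scal 1 x = x) \<and>
     (\<forall>a b x. scal (a * b) x = scal a (scal b x)) \<and>
     (\<forall>a b x. scal (a + b) x = scal a x + scal b x) \<and>
     (\<forall>a x y. scal a (x + y) = scal a x + scal a y) \<and>
     (\<forall>a x y. scal a (x * y) = scal a x * y) \<and>
     (\<forall>a x y. scal a (x * y) = x * scal a y) \<and>
     \<comment> \<open>involution\<close>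
     (\<forall>x. star (star x) = x) \<and>
     (\<forall>x y. star (x + y) = star x + star y) \<and>
     (\<forall>x y. star (x * y) = star y * star x) \<and>
     (\<forall>a x. star (scal a x) = scal (cnj a) (star x)) \<and>
     \<comment> \<open>norm\<close>
     (\<forall>x. nrm x = 0 \<longleftrightarrow> x = 0) \<and>
     (\<forall>x y. nrm (x + y) \<le> nrm x + nrm y) \<and>
     (\<forall>a x. nrm (scal a x) = cmod a * nrm x) \<and>
     (\<forall>x y. nrm (x * y) \<le> nrm x * nrm y) \<and>
     \<comment> \<open>completeness\<close>
     (\<forall>f :: nat \<Rightarrow> 'a.
        (\<forall>e>0. \<exists>N. \<forall>m\<ge>N. \<forall>n\<ge>N. nrm (f m - f n) < e) \<longrightarrow>
        (\<exists>L. \<forall>e>0. \<exists>N. \<forall>n\<ge>N. nrm (f n - L) < e)) \<and>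
     \<comment> \<open>C*-identity\<close>
     (\<forall>x. nrm (star x * x) = nrm x ^ 2)"

definition magic :: "('a::ring_1 \<Rightarrow> 'a) \<Rightarrow> ('x::finite \<Rightarrow> 'x \<Rightarrow> 'a) \<Rightarrow> bool" where
  "magic star u \<longleftrightarrow>
     (\<forall>i j. star (u i j) = u i j \<and> u i j * u i j = u i j) \<and>
     (\<forall>i. (\<Sum>j\<in>UNIV. u i j) = 1) \<and>
     (\<forall>j. (\<Sum>i\<in>UNIV. u i j) = 1)"

definition diff_rel :: "('x::ab_group_add \<Rightarrow> 'x \<Rightarrow> 'a) \<Rightarrow> bool" where
  "diff_rel u \<longleftrightarrow> (\<forall>i j k l. i - j = k - l \<longrightarrow> u i j = u k l)"

text \<open>The permutation matrix (evaluation of u at sigma): u_ij(sigma) = delta_{i, sigma j}.\<close>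

definition perm_mat :: "('x \<Rightarrow> 'x) \<Rightarrow> 'x \<Rightarrow> 'x \<Rightarrow> complex" where
  "perm_mat \<sigma> i j = (if i = \<sigma> j then 1 else 0)"

end

theory Submission
  imports Defs
begin

(* Since u i j depends only on i - j, the column (u a 0) is a family of projections adding
   up to 1, and in a C*-algebra such projections are pairwise orthogonal; hence two entries
   are either equal or have both products zero.  Orthogonality is derived directly from the
   axioms: compressing by one projection e turns the others into elements h with
   norm (1 - h) <= 1 adding up to 0, and a Bernstein polynomial estimate shows that these
   must vanish.  For complex magic matrices the entries are 0 or 1, so the column condition
   singles out one x, and the matrix is that of the translation by x. *)

lemma binomial_commuting:
  fixes a b :: "'a::ring_1"
  assumes ab: "a * b = b * a"
  shows "(a + b) ^ n = (\<Sum>k\<le>n. of_nat (n choose k) * a ^ k * b ^ (n - k))"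
proof (induction n)
  case 0
  then show ?case by simp
next
  case (Suc n)
  have ba: "b * a ^ k = a ^ k * b" for k
    using power_commuting_commutes[OF ab] by simp
  have "(\<Sum>k\<le>Suc n. of_nat (Suc n choose k) * a ^ k * b ^ (Suc n - k))
      = b ^ Suc n + (\<Sum>j\<le>n. of_nat (n choose Suc j) * a ^ Suc j * b ^ (n - j))
        + (\<Sum>j\<le>n. of_nat (n choose j) * a ^ Suc j * b ^ (n - j))"
    unfolding sum.atMost_Suc_shift
    by (simp del: sum.atMost_Suc add: distrib_right sum.distrib)
  also have "b ^ Suc n + (\<Sum>j\<le>n. of_nat (n choose Suc j) * a ^ Suc j * b ^ (n - j))
      = (\<Sum>k\<le>Suc n. of_nat (n choose k) * a ^ k * b ^ (Suc n - k))"
    unfolding sum.atMost_Suc_shift by (simp del: binomial_Suc_Suc sum.atMost_Suc)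
  also have "\<dots> = (\<Sum>k\<le>n. of_nat (n choose k) * a ^ k * b ^ (Suc n - k))"
    by (simp add: binomial_eq_0)
  also have "\<dots> = b * (\<Sum>k\<le>n. of_nat (n choose k) * a ^ k * b ^ (n - k))"
    unfolding sum_distrib_left
  proof (rule sum.cong[OF refl])
    fix k assume "k \<in> {..n}"
    then have "b ^ (Suc n - k) = b * b ^ (n - k)" by (simp add: Suc_diff_le)
    moreover have "b * (of_nat (n choose k) * a ^ k * b ^ (n - k))
        = of_nat (n choose k) * (b * a ^ k) * b ^ (n - k)"
      by (metis mult.assoc mult_of_nat_commute)
    ultimately show "of_nat (n choose k) * a ^ k * b ^ (Suc n - k)
        = b * (of_nat (n choose k) * a ^ k * b ^ (n - k))"
      by (simp add: ba mult.assoc)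
  qed
  also have "(\<Sum>j\<le>n. of_nat (n choose j) * a ^ Suc j * b ^ (n - j))
      = a * (\<Sum>k\<le>n. of_nat (n choose k) * a ^ k * b ^ (n - k))"
    unfolding sum_distrib_left
    by (rule sum.cong[OF refl]) (metis mult.assoc mult_of_nat_commute power_Suc)
  finally show ?case using Suc.IH by (simp add: distrib_right)
qed

lemma binomial_commuting_weighted:
  fixes a b :: "'a::ring_1"
  assumes ab: "a * b = b * a"
  shows "(\<Sum>k\<le>Suc n. of_nat (k * (Suc n choose k)) * a ^ k * b ^ (Suc n - k))
     = of_nat (Suc n) * a * (a + b) ^ n"
proof -
  have "(\<Sum>k\<le>Suc n. of_nat (k * (Suc n choose k)) * a ^ k * b ^ (Suc n - k))
      = (\<Sum>j\<le>n. of_nat (Suc j * (Suc n choose Suc j)) * a ^ Suc j * b ^ (n - j))"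
    unfolding sum.atMost_Suc_shift
    by (simp del: binomial_Suc_Suc sum.atMost_Suc of_nat_mult mult_Suc)
  also have "\<dots> = (\<Sum>j\<le>n. of_nat (Suc n) * a * (of_nat (n choose j) * a ^ j * b ^ (n - j)))"
  proof (rule sum.cong[OF refl])
    fix j
    have coeff: "of_nat (Suc j * (Suc n choose Suc j)) = (of_nat (Suc n) * of_nat (n choose j) :: 'a)"
      by (simp only: Suc_times_binomial of_nat_mult)
    have "of_nat (n choose j) * a = a * (of_nat (n choose j) :: 'a)"
      by (rule mult_of_nat_commute)
    then show "of_nat (Suc j * (Suc n choose Suc j)) * a ^ Suc j * b ^ (n - j)
      = of_nat (Suc n) * a * (of_nat (n choose j) * a ^ j * b ^ (n - j))"
      unfolding coeff by (simp only: mult.assoc power_Suc) (metis mult.assoc)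
  qed
  also have "\<dots> = of_nat (Suc n) * a * (a + b) ^ n"
    by (simp add: binomial_commuting[OF ab] sum_distrib_left)
  finally show ?thesis .
qed

lemma binomial_commuting_signed:
  fixes a b :: "'a::ring_1"
  assumes ab: "a * b = b * a"
  shows "(\<Sum>k\<le>Suc n. of_int ((2 * int k - int (Suc n)) * int (Suc n choose k)) * (a ^ k * b ^ (Suc n - k)))
     = of_nat (Suc n) * (a - b) * (a + b) ^ n"
proof -
  let ?W = "\<lambda>k. of_nat (k * (Suc n choose k)) * a ^ k * b ^ (Suc n - k)"
  let ?B = "\<lambda>k. of_nat (Suc n choose k) * a ^ k * b ^ (Suc n - k)"
  have "of_int ((2 * int k - int (Suc n)) * int (Suc n choose k)) * (a ^ k * b ^ (Suc n - k))
      = ?W k + ?W k - of_nat (Suc n) * ?B k" for k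
  proof -
    have "(2 * int k - int (Suc n)) * int (Suc n choose k)
        = int (k * (Suc n choose k)) + int (k * (Suc n choose k)) - int (Suc n) * int (Suc n choose k)"
      by (simp add: algebra_simps)
    then have "of_int ((2 * int k - int (Suc n)) * int (Suc n choose k))
        = (of_nat (k * (Suc n choose k)) + of_nat (k * (Suc n choose k))
            - of_nat (Suc n) * of_nat (Suc n choose k) :: 'a)"
      by (simp only: of_int_add of_int_diff of_int_mult of_int_of_nat_eq)
    then show ?thesis by (simp only: left_diff_distrib distrib_right mult.assoc)
  qed
  then have "(\<Sum>k\<le>Suc n. of_int ((2 * int k - int (Suc n)) * int (Suc n choose k)) * (a ^ k * b ^ (Suc n - k)))
      = (\<Sum>k\<le>Suc n. ?W k) + (\<Sum>k\<le>Suc n. ?W k) - of_nat (Suc n) * (\<Sum>k\<le>Suc n. ?B k)"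
    by (simp only: sum_subtractf sum.distrib sum_distrib_left)
  also have "\<dots> = of_nat (Suc n) * a * (a + b) ^ n + of_nat (Suc n) * a * (a + b) ^ n
      - of_nat (Suc n) * ((a + b) * (a + b) ^ n)"
    by (simp only: binomial_commuting_weighted[OF ab] binomial_commuting[OF ab, symmetric] power_Suc)
  also have "\<dots> = of_nat (Suc n) * (a - b) * (a + b) ^ n"
    by (simp add: algebra_simps)
  finally show ?thesis .
qed

lemma sum_square_mult_choose: "(\<Sum>k\<le>n. k * k * (n choose k)) * 4 = n * (n + 1) * 2 ^ n"
proof (cases n)
  case 0
  then show ?thesis by simp
next
  case (Suc m)
  have "(\<Sum>k\<le>Suc m. k * k * (Suc m choose k)) = (\<Sum>j\<le>m. Suc j * (Suc j * (Suc m choose Suc j)))"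
    unfolding sum.atMost_Suc_shift
    by (simp del: binomial_Suc_Suc sum.atMost_Suc mult_Suc mult_Suc_right add: mult.assoc)
  also have "\<dots> = (\<Sum>j\<le>m. Suc m * (j * (m choose j)) + Suc m * (m choose j))"
    by (rule sum.cong[OF refl]) (simp only: Suc_times_binomial, simp add: algebra_simps)
  also have "\<dots> = Suc m * (m * 2 ^ (m - 1)) + Suc m * 2 ^ m"
    by (simp add: sum.distrib sum_distrib_left[symmetric] choose_linear_sum choose_row_sum)
  finally have sum: "(\<Sum>k\<le>Suc m. k * k * (Suc m choose k)) = Suc m * (m * 2 ^ (m - 1)) + Suc m * 2 ^ m" .
  show ?thesis
    unfolding Suc sum by (cases m) (simp_all add: algebra_simps)
qed

lemma binomial_variance: "(\<Sum>k\<le>n. (2 * real k - real n) ^ 2 * real (n choose k)) = real n * 2 ^ n"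
proof -
  have squares: "(\<Sum>k\<le>n. real k * real k * real (n choose k)) * 4 = real n * (real n + 1) * 2 ^ n"
    using arg_cong[OF sum_square_mult_choose[of n], of real] by (simp add: algebra_simps)
  have linear: "(\<Sum>k\<le>n. real k * real (n choose k)) * 2 = real n * 2 ^ n"
  proof -
    have "real (\<Sum>k\<le>n. k * (n choose k)) * 2 = real n * 2 ^ n"
      unfolding choose_linear_sum by (cases n) (auto simp: algebra_simps)
    then show ?thesis by simp
  qed
  have row: "(\<Sum>k\<le>n. real (n choose k)) = 2 ^ n"
    using arg_cong[OF choose_row_sum[of n], of real] by simp
  have "(\<Sum>k\<le>n. (2 * real k - real n) ^ 2 * real (n choose k))
     = 4 * (\<Sum>k\<le>n. real k * real k * real (n choose k))
       - 4 * real n * (\<Sum>k\<le>n. real k * real (n choose k))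
       + real n ^ 2 * (\<Sum>k\<le>n. real (n choose k))"
    by (simp add: power2_eq_square algebra_simps sum.distrib sum_subtractf sum_distrib_left)
  also have "\<dots> = real n * 2 ^ n"
    using squares linear row by (simp add: algebra_simps power2_eq_square)
  finally show ?thesis .
qed

lemma binomial_abs_deviation_le:
  assumes c: "c > 0"
  shows "(\<Sum>k\<le>n. \<bar>2 * real k - real n\<bar> * real (n choose k)) \<le> 2 ^ n * (real n / (2 * c) + c / 2)"
proof -
  have am_gm: "\<bar>t\<bar> \<le> t ^ 2 / (2 * c) + c / 2" for t :: real
  proof -
    have "0 \<le> (\<bar>t\<bar> - c) ^ 2" by simp
    then have "2 * c * \<bar>t\<bar> \<le> t ^ 2 + c ^ 2" by (simp add: power2_eq_square algebra_simps)
    then show ?thesis using c by (simp add: field_simps power2_eq_square)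
  qed
  have "(\<Sum>k\<le>n. \<bar>2 * real k - real n\<bar> * real (n choose k))
      \<le> (\<Sum>k\<le>n. ((2 * real k - real n) ^ 2 / (2 * c) + c / 2) * real (n choose k))"
    by (intro sum_mono mult_right_mono am_gm) simp
  also have "\<dots> = (\<Sum>k\<le>n. (2 * real k - real n) ^ 2 * real (n choose k)) / (2 * c)
       + c / 2 * (\<Sum>k\<le>n. real (n choose k))"
    by (simp add: algebra_simps sum.distrib sum_distrib_left sum_divide_distrib)
  also have "\<dots> = 2 ^ n * (real n / (2 * c) + c / 2)"
    unfolding binomial_variance using arg_cong[OF choose_row_sum[of n], of real]
    by (simp add: algebra_simps)
  finally show ?thesis .
qed

lemma nonpos_if_le_deviation_bound:
  fixes d r :: real
  assumes r: "r \<ge> 0" and bound: "\<And>n c. c > 0 \<Longrightarrow> real (Suc n) * d \<le> r * (real (Suc n) / c + c)"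
  shows "d \<le> 0"
proof (rule ccontr)
  assume "\<not> d \<le> 0"
  then have d: "d > 0" by simp
  obtain n where "4 * (r + 1) ^ 2 / d ^ 2 < real n"
    using reals_Archimedean2 by blast
  then have n: "4 * (r + 1) ^ 2 / d ^ 2 < real (Suc n)" by simp
  define c where "c = 2 * (r + 1) / d"
  have c: "c > 0" using r d by (simp add: c_def)
  have "real (Suc n) * d \<le> r * (real (Suc n) / c) + r * c"
    using bound[OF c, of n] by (simp add: algebra_simps)
  also have "r * (real (Suc n) / c) \<le> (r + 1) * (real (Suc n) / c)"
    using c by (intro mult_right_mono) simp_all
  also have "r * c \<le> (r + 1) * c"
    using c by simp
  also have "(r + 1) * (real (Suc n) / c) + (r + 1) * c = real (Suc n) * d / 2 + 2 * (r + 1) ^ 2 / d"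
    using r d by (simp add: c_def power2_eq_square divide_simps) (simp add: algebra_simps)
  finally have "real (Suc n) * d ^ 2 \<le> 4 * (r + 1) ^ 2"
    using d by (simp add: field_simps power2_eq_square)
  with n d show False by (simp add: field_simps)
qed

lemma le_one_if_iterated_squares_le_two:
  fixes t :: real
  assumes bound: "\<And>k. t ^ (2 ^ k) \<le> 2"
  shows "t \<le> 1"
proof (rule ccontr)
  assume "\<not> t \<le> 1"
  then have t1: "t > 1" by simp
  obtain n :: nat where n: "real n > 1 / (t - 1)" using reals_Archimedean2 by blast
  have "real n < 2 ^ n" by (metis less_exp of_nat_less_iff of_nat_numeral of_nat_power)
  then have "1 < real n * (t - 1)" using n t1 by (simp add: field_simps)
  also have "\<dots> \<le> 2 ^ n * (t - 1)" using \<open>real n < 2 ^ n\<close> t1 by simp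
  finally have "2 < 1 + real (2 ^ n) * (t - 1)" by simp
  also have "\<dots> \<le> (1 + (t - 1)) ^ (2 ^ n)" by (rule Bernoulli_inequality) (use t1 in simp)
  also have "\<dots> \<le> 2" using bound[of n] by simp
  finally show False by simp
qed

locale cstar =
  fixes scal :: "complex \<Rightarrow> 'b::ring_1 \<Rightarrow> 'b" and star :: "'b \<Rightarrow> 'b" and nrm :: "'b \<Rightarrow> real"
  assumes cstar_algebra: "cstar_algebra scal star nrm"
begin

lemma
  shows scal_one: "scal 1 x = x"
    and scal_add_left: "scal (a + b) x = scal a x + scal b x"
    and scal_add_right: "scal a (x + y) = scal a x + scal a y"
    and star_star: "star (star x) = x"
    and star_add: "star (x + y) = star x + star y"
    and star_mult: "star (x * y) = star y * star x"
    and nrm_eq_0_iff: "nrm x = 0 \<longleftrightarrow> x = 0"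
    and nrm_triangle: "nrm (x + y) \<le> nrm x + nrm y"
    and nrm_scal: "nrm (scal a x) = cmod a * nrm x"
    and nrm_mult_le: "nrm (x * y) \<le> nrm x * nrm y"
    and nrm_star_mult_self: "nrm (star x * x) = nrm x ^ 2"
  using cstar_algebra unfolding cstar_algebra_def by simp_all

lemma scal_zero_left: "scal 0 x = 0"
  using scal_add_left[of 0 0 x] by simp

lemma scal_zero_right: "scal a 0 = 0"
  using scal_add_right[of a 0 0] by simp

lemma scal_uminus_left: "scal (- a) x = - scal a x"
proof -
  have "scal a x + scal (- a) x = 0"
    using scal_add_left[of a "- a" x] by (simp add: scal_zero_left)
  then show ?thesis by (rule minus_unique[symmetric])
qed

lemma scal_of_nat: "scal (of_nat n) x = of_nat n * x"
  by (induction n) (simp_all add: scal_zero_left scal_add_left scal_one distrib_right)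

lemma scal_of_int: "scal (of_int t) x = of_int t * x"
proof (cases t rule: int_cases)
  case (nonneg n)
  then show ?thesis using scal_of_nat[of n x] by simp
next
  case (neg n)
  then have "of_int t = - (of_nat (Suc n) :: complex)" "of_int t = - (of_nat (Suc n) :: 'b)"
    by simp_all
  then show ?thesis by (simp only: scal_uminus_left scal_of_nat mult_minus_left)
qed

lemma add_self_eq_0_imp: "(h::'b) + h = 0 \<Longrightarrow> h = 0"
  using scal_add_right[of "1/2" h h] scal_add_left[of "1/2" "1/2" h]
  by (simp add: scal_one scal_zero_right)

lemma nrm_of_int_mult: "nrm (of_int t * x) = \<bar>of_int t\<bar> * nrm x"
  using nrm_scal[of "of_int t" x] by (simp add: scal_of_int)

lemma nrm_of_nat_mult: "nrm (of_nat n * x) = of_nat n * nrm x"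
  using nrm_of_int_mult[of "int n" x] by simp

lemma nrm_zero: "nrm 0 = 0"
  by (simp add: nrm_eq_0_iff)

lemma nrm_uminus: "nrm (- x) = nrm x"
  using nrm_of_int_mult[of "-1" x] by simp

lemma nrm_nonneg: "nrm x \<ge> 0"
  using nrm_triangle[of x "- x"] nrm_uminus[of x] by (simp add: nrm_zero)

lemma nrm_sum_le: "nrm (sum f A) \<le> (\<Sum>a\<in>A. nrm (f a))"
proof (induction A rule: infinite_finite_induct)
  case (insert a A)
  then show ?case using nrm_triangle[of "f a" "sum f A"] by simp
qed (simp_all add: nrm_zero)

lemma star_zero: "star 0 = 0"
  using star_add[of 0 0] by simp

lemma star_diff: "star (x - y) = star x - star y"
  using star_add[of "x - y" y] by (simp add: algebra_simps)

lemma star_one: "star 1 = 1"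
  using star_mult[of "star 1" 1] by (simp add: star_star)

definition projection :: "'b \<Rightarrow> bool" where
  "projection p \<longleftrightarrow> star p = p \<and> p * p = p"

lemma projection_one_minus: "projection p \<Longrightarrow> projection (1 - p)"
  unfolding projection_def by (simp add: star_diff star_one algebra_simps)

lemma nrm_projection_le_one:
  assumes "projection p"
  shows "nrm p \<le> 1"
proof -
  have "nrm p = nrm p ^ 2"
    using nrm_star_mult_self[of p] assms by (simp add: projection_def)
  then have "nrm p = 0 \<or> nrm p = 1" by (simp add: power2_eq_square)
  then show ?thesis by auto
qed

lemma nrm_one_le: "nrm 1 \<le> 1"
  by (rule nrm_projection_le_one) (simp add: projection_def star_one)

lemma nrm_power_le: "nrm (x ^ k) \<le> nrm x ^ k"
proof (induction k)
  case 0
  then show ?case using nrm_one_le by simp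
next
  case (Suc k)
  have "nrm (x ^ Suc k) \<le> nrm x * nrm (x ^ k)" using nrm_mult_le[of x "x ^ k"] by simp
  also have "\<dots> \<le> nrm x * nrm x ^ k" by (rule mult_left_mono[OF Suc nrm_nonneg])
  finally show ?case by simp
qed

lemma star_power: "star x = x \<Longrightarrow> star (x ^ n) = x ^ n"
  by (induction n) (simp_all add: star_one star_mult power_commutes)

lemma nrm_power_two_power:
  assumes "star x = x"
  shows "nrm (x ^ (2 ^ k)) = nrm x ^ (2 ^ k)"
proof (induction k)
  case (Suc k)
  have "x ^ (2 ^ Suc k) = star (x ^ (2 ^ k)) * x ^ (2 ^ k)"
    using star_power[OF assms] by (simp add: power_add[symmetric] mult_2)
  then have "nrm (x ^ (2 ^ Suc k)) = nrm (x ^ (2 ^ k)) ^ 2"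
    using nrm_star_mult_self by simp
  then show ?case using Suc by (simp add: power_mult[symmetric] mult.commute)
qed simp

lemma nrm_power_mult_power_le:
  assumes a: "nrm a \<le> r" and b: "nrm b \<le> r" and k: "k \<le> N"
  shows "nrm (a ^ k * b ^ (N - k)) \<le> r ^ N"
proof -
  have r: "0 \<le> r" using a nrm_nonneg order_trans by blast
  have "nrm (a ^ k * b ^ (N - k)) \<le> nrm (a ^ k) * nrm (b ^ (N - k))"
    by (rule nrm_mult_le)
  also have "\<dots> \<le> nrm a ^ k * nrm b ^ (N - k)"
    by (intro mult_mono nrm_power_le nrm_nonneg zero_le_power)
  also have "\<dots> \<le> r ^ k * r ^ (N - k)"
    by (intro mult_mono power_mono a b r nrm_nonneg zero_le_power)
  finally show ?thesis using k by (simp flip: power_add)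
qed

(* For N = n + 1, combining the a^k b^(N-k) with the centred binomial weights
   (2k - N) (N choose k) gives N (a - b) (a + b)^n = N (2m)^n (a - b); on the other hand its
   norm is at most m^N times the mean absolute deviation of the binomial distribution,
   which is of order 2^N sqrt N. *)
lemma commuting_nrm_diff_le:
  assumes ab: "a * b = b * a" and a: "nrm a \<le> real m" and b: "nrm b \<le> real m"
    and sum: "a + b = of_nat (2 * m)" and m: "m > 0" and c: "c > 0"
  shows "real (Suc n) * nrm (a - b) \<le> real m * (real (Suc n) / c + c)"
proof -
  let ?coeff = "\<lambda>k. (2 * int k - int (Suc n)) * int (Suc n choose k)"
  have "(2 * real m) ^ n * (real (Suc n) * nrm (a - b))
      = nrm (of_nat ((2 * m) ^ n) * (of_nat (Suc n) * (a - b)))"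
    by (simp only: nrm_of_nat_mult) simp
  also have "\<dots> = nrm (of_nat (Suc n) * (a - b) * (a + b) ^ n)"
    by (simp only: sum of_nat_power[symmetric] mult_of_nat_commute[of "(2 * m) ^ n"] mult.assoc)
  also have "\<dots> = nrm (\<Sum>k\<le>Suc n. of_int (?coeff k) * (a ^ k * b ^ (Suc n - k)))"
    by (simp only: binomial_commuting_signed[OF ab])
  also have "\<dots> \<le> (\<Sum>k\<le>Suc n. \<bar>2 * real k - real (Suc n)\<bar> * real (Suc n choose k) * real m ^ Suc n)"
  proof (rule order_trans[OF nrm_sum_le sum_mono])
    fix k assume "k \<in> {..Suc n}"
    then have "nrm (a ^ k * b ^ (Suc n - k)) \<le> real m ^ Suc n"
      by (intro nrm_power_mult_power_le a b) simp
    then have "nrm (of_int (?coeff k) * (a ^ k * b ^ (Suc n - k)))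
        \<le> \<bar>real_of_int (?coeff k)\<bar> * real m ^ Suc n"
      unfolding nrm_of_int_mult by (intro mult_left_mono) simp_all
    then show "nrm (of_int (?coeff k) * (a ^ k * b ^ (Suc n - k)))
        \<le> \<bar>2 * real k - real (Suc n)\<bar> * real (Suc n choose k) * real m ^ Suc n"
      by (simp add: abs_mult)
  qed
  also have "\<dots> = real m ^ Suc n * (\<Sum>k\<le>Suc n. \<bar>2 * real k - real (Suc n)\<bar> * real (Suc n choose k))"
    by (simp add: sum_distrib_left algebra_simps)
  also have "\<dots> \<le> real m ^ Suc n * (2 ^ Suc n * (real (Suc n) / (2 * c) + c / 2))"
    by (intro mult_left_mono binomial_abs_deviation_le c) simp
  also have "\<dots> = (2 * real m) ^ n * (real m * (real (Suc n) / c + c))"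
    using c by (simp add: field_simps)
  finally show ?thesis
    using m by (simp add: mult_le_cancel_left_pos)
qed

lemma commuting_eq_if_add_eq:
  assumes ab: "a * b = b * a" and a: "nrm a \<le> real m" and b: "nrm b \<le> real m"
    and sum: "a + b = of_nat (2 * m)"
  shows "a = b"
proof (cases "m = 0")
  case True
  then show ?thesis using a b nrm_nonneg[of a] nrm_nonneg[of b] by (simp add: nrm_eq_0_iff)
next
  case False
  then have "real (Suc n) * nrm (a - b) \<le> real m * (real (Suc n) / c + c)" if "c > 0" for n c
    using commuting_nrm_diff_le[OF ab a b sum _ that] by simp
  then have "nrm (a - b) \<le> 0"
    by (rule nonpos_if_le_deviation_bound[OF of_nat_0_le_iff])
  then show ?thesis
    using nrm_nonneg[of "a - b"] by (simp add: nrm_eq_0_iff)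
qed

lemma nrm_of_nat_le: "nrm (of_nat n :: 'b) \<le> real n"
  using nrm_of_nat_mult[of n 1] nrm_one_le by (simp add: mult_left_le)

(* With m = |D| + 1 the commuting elements m + h y = 1 + (\<Sum>c\<in>D. 1 - h c) and
   m - h y = |D| + (1 - h y) both have norm at most m and add up to 2 m. *)
lemma summand_eq_0_if_sum_eq_0:
  assumes D: "finite D" "y \<notin> D"
    and contraction: "\<And>c. c \<in> insert y D \<Longrightarrow> nrm (1 - h c) \<le> 1"
    and sum: "h y + (\<Sum>c\<in>D. h c) = 0"
  shows "h y = 0"
proof -
  define m where "m = Suc (card D)"
  have "of_nat m + h y = of_nat m - h y"
  proof (rule commuting_eq_if_add_eq)
    show "(of_nat m + h y) * (of_nat m - h y) = (of_nat m - h y) * (of_nat m + h y)"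
      using mult_of_nat_commute[of m "h y"] by (simp add: algebra_simps)
    show "of_nat m + h y + (of_nat m - h y) = of_nat (2 * m)"
      by (simp add: mult_2)
    have "of_nat m + h y = 1 + (\<Sum>c\<in>D. 1 - h c)"
      using sum D by (simp add: m_def sum_subtractf eq_neg_iff_add_eq_0 add.commute)
    also have "nrm \<dots> \<le> nrm 1 + (\<Sum>c\<in>D. nrm (1 - h c))"
      by (intro order_trans[OF nrm_triangle] add_left_mono nrm_sum_le)
    also have "\<dots> \<le> 1 + (\<Sum>c\<in>D. 1)"
      using contraction by (intro add_mono nrm_one_le sum_mono) auto
    finally show "nrm (of_nat m + h y) \<le> real m"
      using D by (simp add: m_def)
    have "of_nat m - h y = of_nat (card D) + (1 - h y)"
      by (simp add: m_def)
    also have "nrm \<dots> \<le> real (card D) + 1"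
      using contraction[of y] by (intro order_trans[OF nrm_triangle] add_mono nrm_of_nat_le) auto
    finally show "nrm (of_nat m - h y) \<le> real m"
      by (simp add: m_def)
  qed
  then have "h y + h y = 0" by (simp add: algebra_simps)
  then show ?thesis by (rule add_self_eq_0_imp)
qed

(* The powers of such a sum are f + w^n, of norm at most 2; as the sum is self-adjoint,
   the C*-identity turns this into a bound on its own norm. *)
lemma nrm_projection_add_contraction_le_one:
  assumes self_adjoint: "star (f + w) = f + w" and f: "projection f"
    and fw: "f * w = 0" and wf: "w * f = 0" and w: "nrm w \<le> 1"
  shows "nrm (f + w) \<le> 1"
proof (rule le_one_if_iterated_squares_le_two)
  have ff: "f * f = f" using f by (simp add: projection_def)
  have power: "(f + w) ^ Suc n = f + w ^ Suc n" for n
  proof (induction n)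
    case (Suc n)
    have "(f + w) ^ Suc (Suc n) = f * f + (f * w) * w ^ n + w * f + w ^ Suc (Suc n)"
      using Suc by (simp add: algebra_simps)
    then show ?case by (simp add: ff fw wf)
  qed simp
  fix k
  obtain n where n: "(2::nat) ^ k = Suc n"
    using not0_implies_Suc[of "2 ^ k"] by auto
  have "nrm (f + w) ^ (2 ^ k) = nrm ((f + w) ^ (2 ^ k))"
    by (rule nrm_power_two_power[OF self_adjoint, symmetric])
  also have "\<dots> = nrm (f + w ^ Suc n)"
    by (simp only: n power)
  also have "\<dots> \<le> nrm f + nrm w ^ Suc n"
    by (intro order_trans[OF nrm_triangle] add_left_mono nrm_power_le)
  also have "\<dots> \<le> 2"
    using nrm_projection_le_one[OF f] power_le_one[OF nrm_nonneg w, of "Suc n"] by simp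
  finally show "nrm (f + w) ^ (2 ^ k) \<le> 2" .
qed

lemma nrm_one_minus_compression_le_one:
  assumes e: "projection e" and q: "projection q"
  shows "nrm (1 - e * q * e) \<le> 1"
proof -
  define f where "f = 1 - e"
  define w where "w = e * (1 - q) * e"
  have ee: "star e = e" "e * e = e" and qq: "star q = q"
    using e q by (simp_all add: projection_def)
  have f: "projection f"
    unfolding f_def by (rule projection_one_minus[OF e])
  have sum: "1 - e * q * e = f + w"
    unfolding f_def w_def by (simp add: algebra_simps ee)
  have self_adjoint: "star (f + w) = f + w"
    unfolding sum[symmetric] by (simp add: star_diff star_one star_mult ee qq mult.assoc)
  have fe: "f * e = 0" and ef: "e * f = 0"
    unfolding f_def by (simp_all add: algebra_simps ee)
  have fw: "f * w = 0" and wf: "w * f = 0"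
    unfolding w_def by (simp_all add: mult.assoc ef flip: mult.assoc[of f] add: fe)
  have "nrm w \<le> nrm e * nrm (1 - q) * nrm e"
    unfolding w_def by (meson mult_right_mono nrm_mult_le nrm_nonneg order_trans)
  also have "\<dots> \<le> 1"
    using nrm_projection_le_one[OF e] nrm_projection_le_one[OF projection_one_minus[OF q]]
    by (simp add: mult_le_one nrm_nonneg)
  finally have "nrm w \<le> 1" .
  with self_adjoint f fw wf show ?thesis
    unfolding sum by (rule nrm_projection_add_contraction_le_one)
qed

(* Compressed by e = P x, the projections P c with c \<noteq> x add up to e (1 - e) e = 0;
   hence e P y e = (P y e)\<^sup>* (P y e) vanishes. *)
lemma projections_sum_one_orthogonal:
  assumes A: "finite A" and P: "\<And>c. c \<in> A \<Longrightarrow> projection (P c)"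
    and sum: "(\<Sum>c\<in>A. P c) = 1" and x: "x \<in> A" and y: "y \<in> A" and xy: "x \<noteq> y"
  shows "P x * P y = 0"
proof -
  define e where "e = P x"
  define h where "h c = e * P c * e" for c
  have e: "projection e" using P x by (simp add: e_def)
  then have ee: "star e = e" "e * e = e" by (simp_all add: projection_def)
  have "(\<Sum>c\<in>A - {x}. P c) = 1 - e"
    using sum.remove[OF A x, of P] sum by (simp add: e_def algebra_simps)
  moreover have "(\<Sum>c\<in>A - {x}. h c) = e * (\<Sum>c\<in>A - {x}. P c) * e"
    by (simp add: h_def sum_distrib_left sum_distrib_right)
  ultimately have "(\<Sum>c\<in>A - {x}. h c) = e * (1 - e) * e"
    by simp
  also have "\<dots> = 0"
    by (simp add: algebra_simps ee)
  finally have sum_h: "h y + (\<Sum>c\<in>A - {x} - {y}. h c) = 0"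
    using sum.remove[of "A - {x}" y h] A y xy by simp
  have hy: "h y = 0"
    using A y P
    by (intro summand_eq_0_if_sum_eq_0[OF _ _ _ sum_h])
      (auto simp: h_def intro: nrm_one_minus_compression_le_one[OF e])
  define z where "z = P y * e"
  have Py: "star (P y) = P y" "P y * P y = P y"
    using P[OF y] by (simp_all add: projection_def)
  have "star z * z = h y"
    by (simp add: z_def h_def star_mult ee Py mult.assoc flip: mult.assoc[of "P y" "P y"])
  then have "nrm z = 0"
    using hy nrm_star_mult_self[of z] by (simp add: nrm_zero)
  then have "star z = 0"
    by (simp add: nrm_eq_0_iff star_zero)
  then have "e * P y = 0"
    by (simp add: z_def star_mult ee Py)
  then show ?thesis
    by (simp add: e_def)
qed

end

lemma magic_diff_rel_entries_commute:
  fixes u :: "'x::{ab_group_add, finite} \<Rightarrow> 'x \<Rightarrow> 'b::ring_1"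
  assumes "cstar_algebra scal star nrm" and magic: "magic star u" and diff: "diff_rel u"
  shows "u i j * u k l = u k l * u i j"
proof -
  interpret cstar scal star nrm by (rule cstar.intro) fact
  have column: "u i j = u (i - j) 0" for i j
    using diff unfolding diff_rel_def by (metis diff_zero)
  have "projection (u a 0)" for a
    using magic by (simp add: magic_def projection_def)
  moreover have "(\<Sum>a\<in>UNIV. u a 0) = 1"
    using magic by (simp add: magic_def)
  ultimately have orthogonal: "u a 0 * u b 0 = 0" if "a \<noteq> b" for a b
    using that by (intro projections_sum_one_orthogonal[of UNIV]) auto
  show ?thesis
    using orthogonal[of "i - j" "k - l"] orthogonal[of "k - l" "i - j"]
    by (cases "i - j = k - l") (simp_all add: column[of i j] column[of k l])
qed

lemma perm_mat_translation:
  "perm_mat (\<lambda>j. j + x) i j = (if i - j = (x::'x::ab_group_add) then 1 else 0)"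
  unfolding perm_mat_def diff_eq_eq by (simp add: add.commute)

lemma diff_rel_perm_mat_translation: "diff_rel (perm_mat (\<lambda>j. j + (x::'x::ab_group_add)))"
  unfolding diff_rel_def perm_mat_translation by simp

lemma translation_permutes: "(\<lambda>j. j + (x::'x::group_add)) permutes UNIV"
  by (rule bij_imp_permutes) (simp_all add: bij_plus_right)

lemma magic_perm_mat:
  assumes "\<sigma> permutes UNIV"
  shows "magic cnj (perm_mat \<sigma>)"
proof -
  have "(\<Sum>j\<in>UNIV. perm_mat \<sigma> i j) = 1" for i
  proof -
    have "perm_mat \<sigma> i j = (if j = inv \<sigma> i then 1 else 0)" for j
      using permutes_inv_eq[OF assms, of i j] by (auto simp: perm_mat_def)
    then show ?thesis by simp
  qed
  then show ?thesis
    unfolding magic_def by (simp add: perm_mat_def)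
qed

lemma ex1_eq_1_if_zero_one_sum_eq_1:
  fixes f :: "'a \<Rightarrow> 'b::{comm_semiring_1, semiring_char_0}"
  assumes "finite A" and "\<And>i. i \<in> A \<Longrightarrow> f i = 0 \<or> f i = 1" and "sum f A = 1"
  shows "\<exists>!i. i \<in> A \<and> f i = 1"
proof -
  have "sum f A = (\<Sum>i\<in>A. of_bool (f i = 1))"
    using assms(2) by (intro sum.cong) auto
  then have "card (A \<inter> {i. f i = 1}) = Suc 0"
    using assms(1,3) by simp
  then obtain i where "A \<inter> {i. f i = 1} = {i}"
    by (auto simp: card_1_singleton_iff)
  then show ?thesis by (auto simp: set_eq_iff)
qed

lemma magic_diff_rel_complex_eq_translations:
  "{u :: 'x::{ab_group_add, finite} \<Rightarrow> 'x \<Rightarrow> complex. magic cnj u \<and> diff_rel u}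
     = {perm_mat (\<lambda>j. j + x) | x. True}"
proof (intro equalityI subsetI)
  fix u :: "'x \<Rightarrow> 'x \<Rightarrow> complex"
  assume "u \<in> {u. magic cnj u \<and> diff_rel u}"
  then have magic: "magic cnj u" and diff: "diff_rel u" by auto
  have zero_one: "u i 0 = 0 \<or> u i 0 = 1" for i
  proof -
    have "u i 0 * u i 0 = u i 0" using magic by (simp add: magic_def)
    then show ?thesis by simp
  qed
  moreover have "(\<Sum>i\<in>UNIV. u i 0) = 1"
    using magic by (simp add: magic_def)
  ultimately obtain x where x: "u x 0 = 1" and unique: "\<And>i. u i 0 = 1 \<Longrightarrow> i = x"
    using ex1_eq_1_if_zero_one_sum_eq_1[of UNIV "\<lambda>i. u i 0"] by auto
  have "u i j = perm_mat (\<lambda>j. j + x) i j" for i j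
  proof -
    have column: "u i j = u (i - j) 0"
      using diff unfolding diff_rel_def by (metis diff_zero)
    show ?thesis
    proof (cases "i - j = x")
      case True
      then show ?thesis using x column by (simp add: perm_mat_translation)
    next
      case False
      then have "u (i - j) 0 \<noteq> 1" using unique by blast
      then show ?thesis using zero_one[of "i - j"] column False by (simp add: perm_mat_translation)
    qed
  qed
  then show "u \<in> {perm_mat (\<lambda>j. j + x) | x. True}" by blast
next
  fix u :: "'x \<Rightarrow> 'x \<Rightarrow> complex"
  assume "u \<in> {perm_mat (\<lambda>j. j + x) | x. True}"
  then show "u \<in> {u. magic cnj u \<and> diff_rel u}"
    using magic_perm_mat[OF translation_permutes] diff_rel_perm_mat_translation by auto
qed

lemma permutes_diff_rel_eq_translations:
  "{\<sigma> :: 'x::{ab_group_add, finite} \<Rightarrow> 'x. \<sigma> permutes UNIV \<and> diff_rel (perm_mat \<sigma>)}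
     = {(\<lambda>j. j + x) | x. True}"
proof (intro equalityI subsetI)
  fix \<sigma> :: "'x \<Rightarrow> 'x"
  assume "\<sigma> \<in> {\<sigma>. \<sigma> permutes UNIV \<and> diff_rel (perm_mat \<sigma>)}"
  then have diff: "diff_rel (perm_mat \<sigma>)" by simp
  have "\<sigma> j = j + \<sigma> 0" for j
  proof -
    have "perm_mat \<sigma> (\<sigma> j - j) 0 = perm_mat \<sigma> (\<sigma> j) j"
      using diff unfolding diff_rel_def by (metis diff_zero)
    then have "\<sigma> j - j = \<sigma> 0"
      by (simp add: perm_mat_def split: if_splits)
    then show ?thesis by (simp add: diff_eq_eq add.commute)
  qed
  then have "\<sigma> = (\<lambda>j. j + \<sigma> 0)" by (rule ext)
  then show "\<sigma> \<in> {(\<lambda>j. j + x) | x. True}" by blast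
next
  fix \<sigma> :: "'x \<Rightarrow> 'x"
  assume "\<sigma> \<in> {(\<lambda>j. j + x) | x. True}"
  then show "\<sigma> \<in> {\<sigma>. \<sigma> permutes UNIV \<and> diff_rel (perm_mat \<sigma>)}"
    using translation_permutes diff_rel_perm_mat_translation by auto
qed

theorem lemma3p5:
  fixes X :: "'x::{ab_group_add, finite} itself"
  shows
    "(\<forall>(scal :: complex \<Rightarrow> 'b::ring_1 \<Rightarrow> 'b) star nrm (u :: 'x \<Rightarrow> 'x \<Rightarrow> 'b).
        cstar_algebra scal star nrm \<and> magic star u \<and> diff_rel u \<longrightarrow>
        (\<forall>i j k l. u i j * u k l = u k l * u i j))
   \<and> {u :: 'x \<Rightarrow> 'x \<Rightarrow> complex. magic cnj u \<and> diff_rel u}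
       = {perm_mat (\<lambda>j. j + x) | x. True}
   \<and> {\<sigma> :: 'x \<Rightarrow> 'x. \<sigma> permutes UNIV \<and> diff_rel (perm_mat \<sigma>)}
       = {(\<lambda>j. j + x) | x. True}"
  using magic_diff_rel_entries_commute magic_diff_rel_complex_eq_translations
    permutes_diff_rel_eq_translations
  by blast

end
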